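(* Under the setting below, for all $\mathbf k\neq\mathbf h$ in $(\mathbb Z/p\mathbb Z)^{\mathsf N}$ one has $\langle\mathbf k|\mathbf h\rangle=0$. Moreover there is a constant $C_{\mathsf N}$ (independent of $\mathbf h$) such that for every $\mathbf h=(h_1,\dots,h_{\mathsf N})$ with $h_a\in\{0,\dots,p-1\}$, $$\langle\mathbf h|\mathbf h\rangle=\frac{C_{\mathsf N}\prod_{a=1}^{[\mathsf N]}\prod_{j=1}^{h_a}a(\eta_a^{(j)})/\bar a(\eta_a^{(j-1)})}{\prod_{1\le b<a\le[\mathsf N]}\left(\eta_a^{(h_a)}/\eta_b^{(h_b)}-\eta_b^{(h_b)}/\eta_a^{(h_a)}\right)} .$$ (In particular $\langle\mathbf h|\mathbf h\rangle$ does not depend on $h_{\mathsf N}$ when $\mathsf N$ is even.)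
   Context: Fix integers $\mathsf N\ge1$ and $p\ge3$ odd, and $q\in\mathbb C$ with $q^p=1$ and $q^2$ a primitive $p$-th root of unity. Put $\mathtt e_{\mathsf N}=1$ if $\mathsf N$ is even, $\mathtt e_{\mathsf N}=0$ if $\mathsf N$ is odd, and $[\mathsf N]=\mathsf N-\mathtt e_{\mathsf N}$. Let $\mathcal R$ be a finite-dimensional complex vector space, $\mathcal L$ its dual, $\langle\cdot|\cdot\rangle$ the duality pairing, and $\lambda\mapsto\mathsf A(\lambda),\mathsf B(\lambda)$ families of operators on $\mathcal R$ (acting on $\mathcal L$ from the right by transposition); in the paper they are entries of the monodromy matrix $\mathsf M(\lambda)=\mathsf L_{\mathsf N}(\lambda)\cdots\mathsf L_1(\lambda)=\begin{pmatrix}\mathsf A&\mathsf B\\ \mathsf C&\mathsf D\end{pmatrix}$ of the lattice sine-Gordon model with parameters $\kappa_n,\xi_n\neq0$. Let $\eta_1^{(0)},\dots,\eta_{\mathsf N}^{(0)}$ be nonzero complex numbers, $\eta_a^{(h)}=q^h\eta_a^{(0)}$ (depending only on $h$ mod $p$), and assume $(\eta_a^{(h)})^2\ne(\eta_b^{(h')})^2$ for all $a\ne b$ in $\{1,\dots,[\mathsf N]\}$ and all $h,h'$. Let $\textsc k=\prod_{n=1}^{\mathsf N}\kappa_n/i\neq0$, $\mathbf e_a$ the $a$-th unit vector of $(\mathbb Z/p\mathbb Z)^{\mathsf N}$, and for $\mathbf k\in(\mathbb Z/p\mathbb Z)^{\mathsf N}$ put $\mathsf b_{\mathbf k}(\lambda)=\textsc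 k\,(\eta_{\mathsf N}^{(k_{\mathsf N})})^{\mathtt e_{\mathsf N}}\prod_{a=1}^{[\mathsf N]}(\lambda/\eta_a^{(k_a)}-\eta_a^{(k_a)}/\lambda)$ and $\eta_{\mathbf k,\mathsf A}=\prod_{n=1}^{\mathsf N}\xi_n/\prod_{n=1}^{\mathsf N-1}\eta_n^{(k_n)}$. Let $a,\bar a$ be complex functions with $\bar a(\eta_a^{(j)})\neq0$ for all $a,j$. Left SOV basis: a basis $\{\langle\mathbf k|\}_{\mathbf k\in(\mathbb Z/p\mathbb Z)^{\mathsf N}}$ of $\mathcal L$ with $\langle\mathbf k|\mathsf B(\lambda)=\mathsf b_{\mathbf k}(\lambda)\langle\mathbf k|$ and $$\langle\mathbf k|\mathsf A(\lambda)=\mathtt e_{\mathsf N}\frac{\mathsf b_{\mathbf k}(\lambda)}{\eta_{\mathsf N}^{(k_{\mathsf N})}}\Big(\frac{\lambda}{\eta_{\mathbf k,\mathsf A}}\langle\mathbf k-\mathbf e_{\mathsf N}|-\frac{\eta_{\mathbf k,\mathsf A}}{\lambda}\langle\mathbf k+\mathbf e_{\mathsf N}|\Big)+\sum_{a=1}^{[\mathsf N]}\prod_{b\ne a,\,b\le[\mathsf N]}\frac{\lambda/\eta_b^{(k_b)}-\eta_b^{(k_b)}/\lambda}{\eta_a^{(k_a)}/\eta_b^{(k_b)}-\eta_b^{(k_b)}/\eta_a^{(k_a)}}\,a(\eta_a^{(k_a)})\,\langle\mathbf k-\mathbf e_a|.$$ Right SOV basis: a basis $\{|\mathbf k\rangle\}$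 of $\mathcal R$ with $\mathsf B(\lambda)|\mathbf k\rangle=\mathsf b_{\mathbf k}(\lambda)|\mathbf k\rangle$ and $$\mathsf A(\lambda)|\mathbf k\rangle=\mathtt e_{\mathsf N}\frac{\mathsf b_{\mathbf k}(\lambda)}{\eta_{\mathsf N}^{(k_{\mathsf N})}}\Big(\frac{\lambda}{\eta_{\mathbf k,\mathsf A}}|\mathbf k+\mathbf e_{\mathsf N}\rangle-\frac{\eta_{\mathbf k,\mathsf A}}{\lambda}|\mathbf k-\mathbf e_{\mathsf N}\rangle\Big)+\sum_{a=1}^{[\mathsf N]}|\mathbf k+\mathbf e_a\rangle\prod_{b\ne a,\,b\le[\mathsf N]}\frac{\lambda/\eta_b^{(k_b)}-\eta_b^{(k_b)}/\lambda}{\eta_a^{(k_a)}/\eta_b^{(k_b)}-\eta_b^{(k_b)}/\eta_a^{(k_a)}}\,\bar a(\eta_a^{(k_a)}).$$ *)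

theory Defs
  imports "HOL-Analysis.Analysis"
begin

definition eN :: "nat \<Rightarrow> nat" where
  "eN N = (if even N then 1 else 0)"

definition brN :: "nat \<Rightarrow> nat" where
  "brN N = N - eN N"

text \<open>(Z/pZ)^N, represented by functions k with k a in {0..p-1} for a in {1..N},
  and k a = 0 outside {1..N}.\<close>
definition sov_idx :: "nat \<Rightarrow> nat \<Rightarrow> (nat \<Rightarrow> nat) set" where
  "sov_idx N p = {k. (\<forall>a\<in>{1..N}. k a < p) \<and> (\<forall>a. a \<notin> {1..N} \<longrightarrow> k a = 0)}"

definition kplus :: "nat \<Rightarrow> (nat \<Rightarrow> nat) \<Rightarrow> nat \<Rightarrow> (nat \<Rightarrow> nat)" where
  "kplus p k a = k(a := (k a + 1) mod p)"

definition kminus :: "nat \<Rightarrow> (nat \<Rightarrow> nat) \<Rightarrow> nat \<Rightarrow> (nat \<Rightarrow> nat)" where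
  "kminus p k a = k(a := (k a + p - 1) mod p)"

definition sov_eta :: "complex \<Rightarrow> (nat \<Rightarrow> complex) \<Rightarrow> nat \<Rightarrow> nat \<Rightarrow> complex" where
  "sov_eta q eta0 h a = q ^ h * eta0 a"

definition sov_K :: "nat \<Rightarrow> (nat \<Rightarrow> complex) \<Rightarrow> complex" where
  "sov_K N kappa = (\<Prod>n\<in>{1..N}. kappa n / \<i>)"

definition sov_b :: "nat \<Rightarrow> complex \<Rightarrow> (nat \<Rightarrow> complex) \<Rightarrow> (nat \<Rightarrow> complex)
    \<Rightarrow> (nat \<Rightarrow> nat) \<Rightarrow> complex \<Rightarrow> complex" where
  "sov_b N q eta0 kappa k lam =
     sov_K N kappa * (sov_eta q eta0 (k N) N) ^ eN N *
     (\<Prod>a\<in>{1..brN N}. lam / sov_eta q eta0 (k a) a - sov_eta q eta0 (k a) a / lam)"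

definition sov_etaA :: "nat \<Rightarrow> complex \<Rightarrow> (nat \<Rightarrow> complex) \<Rightarrow> (nat \<Rightarrow> complex)
    \<Rightarrow> (nat \<Rightarrow> nat) \<Rightarrow> complex" where
  "sov_etaA N q eta0 xi k =
     (\<Prod>n\<in>{1..N}. xi n) / (\<Prod>n\<in>{1..N-1}. sov_eta q eta0 (k n) n)"

definition sov_coef :: "nat \<Rightarrow> complex \<Rightarrow> (nat \<Rightarrow> complex) \<Rightarrow> (nat \<Rightarrow> nat)
    \<Rightarrow> nat \<Rightarrow> complex \<Rightarrow> complex" where
  "sov_coef N q eta0 k a lam =
     (\<Prod>b\<in>{1..brN N} - {a}.
        (lam / sov_eta q eta0 (k b) b - sov_eta q eta0 (k b) b / lam) /
        (sov_eta q eta0 (k a) a / sov_eta q eta0 (k b) b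
           - sov_eta q eta0 (k b) b / sov_eta q eta0 (k a) a))"

text \<open>Duality pairing between L = C^n (row vectors) and R = C^n (column vectors).\<close>
definition pairing :: "complex ^ 'n \<Rightarrow> complex ^ 'n \<Rightarrow> complex" where
  "pairing l v = (\<Sum>i\<in>UNIV. l $ i * v $ i)"

definition is_basis_family :: "'i set \<Rightarrow> ('i \<Rightarrow> complex ^ 'n) \<Rightarrow> bool" where
  "is_basis_family I f \<longleftrightarrow> finite I \<and> card I = CARD('n) \<and>
     (\<forall>c. (\<Sum>k\<in>I. c k *s f k) = 0 \<longrightarrow> (\<forall>k\<in>I. c k = 0))"

end

theory Submission
  imports Defs
begin

text \<open>
  Orthogonality: \<open>\<langle>k|B(\<lambda>)|h\<rangle>\<close> can be evaluated on either side, so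
  \<open>(b\<^sub>k(\<lambda>) - b\<^sub>h(\<lambda>)) \<langle>k|h\<rangle> = 0\<close>, and the eigenvalues \<open>b\<^sub>k\<close>, \<open>b\<^sub>h\<close> differ at
  some \<open>\<lambda> \<noteq> 0\<close> whenever \<open>k \<noteq> h\<close>.

  Norms: evaluating \<open>\<langle>k|A(\<lambda>)|k - e\<^sub>c\<rangle>\<close> on both sides and using orthogonality,
  only one term of each expansion survives. For a node \<open>c \<le> [N]\<close> this gives a
  recursion in \<open>k\<^sub>c\<close> for \<open>\<langle>k|k\<rangle>\<close> multiplied by the trigonometric Vandermonde
  product of the nodes; the interpolation denominators are absorbed by that product
  (lemma \<open>vdm_node_factor\<close>). For the extra node \<open>N\<close> (\<open>N\<close> even) one gets
  \<open>\<langle>k|k\<rangle> = \<langle>k - e\<^sub>N|k - e\<^sub>N\<rangle>\<close>. Descending from \<open>h\<close> to \<open>0\<close> yields the formula,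
  with \<open>C\<^sub>N\<close> the rescaled norm at \<open>h = 0\<close>.
\<close>

lemma pairing_add_left: "pairing (x + y) z = pairing x z + pairing y z"
  by (simp add: pairing_def distrib_right sum.distrib)

lemma pairing_diff_left: "pairing (x - y) z = pairing x z - pairing y z"
  by (simp add: pairing_def left_diff_distrib sum_subtractf)

lemma pairing_scale_left: "pairing (c *s x) z = c * pairing x z"
  by (simp add: pairing_def sum_distrib_left mult.assoc)

lemma pairing_sum_left: "pairing (sum f S) z = (\<Sum>i\<in>S. pairing (f i) z)"
  by (simp add: pairing_def sum_distrib_right) (rule sum.swap)

lemma pairing_add_right: "pairing z (x + y) = pairing z x + pairing z y"
  by (simp add: pairing_def distrib_left sum.distrib)

lemma pairing_diff_right: "pairing z (x - y) = pairing z x - pairing z y"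
  by (simp add: pairing_def right_diff_distrib sum_subtractf)

lemma pairing_scale_right: "pairing z (c *s x) = c * pairing z x"
  by (simp add: pairing_def sum_distrib_left mult.left_commute)

lemma pairing_sum_right: "pairing z (sum f S) = (\<Sum>i\<in>S. pairing z (f i))"
  by (simp add: pairing_def sum_distrib_left) (rule sum.swap)

text \<open>An operator may act on either side of the pairing (the action on
  \<open>\<L>\<close> is by transposition).\<close>
lemma pairing_adjoint: "pairing (x v* A) y = pairing x (A *v y)"
  unfolding pairing_def vector_matrix_mult_def matrix_vector_mult_def
  by (simp add: sum_distrib_left sum_distrib_right mult_ac) (rule sum.swap)

lemmas pairing_linear =
  pairing_add_left pairing_diff_left pairing_scale_left pairing_sum_left
  pairing_add_right pairing_diff_right pairing_scale_right pairing_sum_right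

section \<open>The trigonometric Vandermonde product\<close>

text \<open>\<open>tdiff x y = x/y - y/x\<close>; for \<open>x = e\<^sup>i\<^sup>u\<close>, \<open>y = e\<^sup>i\<^sup>v\<close> this is \<open>2i sin(u - v)\<close>.\<close>
definition tdiff :: "'a::field \<Rightarrow> 'a \<Rightarrow> 'a" where
  "tdiff x y = x / y - y / x"

lemma tdiff_swap: "tdiff y x = - tdiff x y"
  by (simp add: tdiff_def)

lemma tdiff_eq_0_iff: "x \<noteq> 0 \<Longrightarrow> y \<noteq> 0 \<Longrightarrow> tdiff x y = 0 \<longleftrightarrow> x\<^sup>2 = y\<^sup>2"
  by (simp add: tdiff_def field_simps power2_eq_square)

text \<open>The product \<open>\<Prod>\<^bsub>b<a\<le>M\<^esub> tdiff (x\<^sub>a) (x\<^sub>b)\<close> appearing in the norm formula, and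
  the denominator \<open>\<Prod>\<^bsub>b\<noteq>c\<^esub> tdiff (x\<^sub>c) (x\<^sub>b)\<close> of the \<open>c\<close>-th interpolation coefficient.\<close>
definition vdm :: "nat \<Rightarrow> (nat \<Rightarrow> 'a::field) \<Rightarrow> 'a" where
  "vdm M x = (\<Prod>a\<in>{1..M}. \<Prod>b\<in>{1..<a}. tdiff (x a) (x b))"

definition node_factor :: "nat \<Rightarrow> (nat \<Rightarrow> 'a::field) \<Rightarrow> nat \<Rightarrow> 'a" where
  "node_factor M x c = (\<Prod>b\<in>{1..M} - {c}. tdiff (x c) (x b))"

lemma vdm_cong: "(\<And>a. a \<in> {1..M} \<Longrightarrow> x a = y a) \<Longrightarrow> vdm M x = vdm M y"
  unfolding vdm_def by (intro prod.cong) auto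

lemma vdm_pairs_through_node:
  fixes x :: "nat \<Rightarrow> 'a::field"
  assumes c: "c \<in> {1..M}"
  shows "prod (\<lambda>(a, b). tdiff (x a) (x b)) ({c} \<times> {1..<c} \<union> (\<lambda>a. (a, c)) ` {c<..M})
         = (-1) ^ (M - c) * node_factor M x c"
proof -
  have split: "{1..M} - {c} = {1..<c} \<union> {c<..M}" using c by auto
  have below: "prod (\<lambda>(a, b). tdiff (x a) (x b)) ({c} \<times> {1..<c}) = (\<Prod>b\<in>{1..<c}. tdiff (x c) (x b))"
  proof -
    have "{c} \<times> {1..<c} = Pair c ` {1..<c}" by auto
    then show ?thesis by (simp add: prod.reindex inj_on_def)
  qed
  have above: "prod (\<lambda>(a, b). tdiff (x a) (x b)) ((\<lambda>a. (a, c)) ` {c<..M})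
      = (-1) ^ (M - c) * (\<Prod>a\<in>{c<..M}. tdiff (x c) (x a))"
  proof -
    have "prod (\<lambda>(a, b). tdiff (x a) (x b)) ((\<lambda>a. (a, c)) ` {c<..M})
        = (\<Prod>a\<in>{c<..M}. (-1) * tdiff (x c) (x a))"
      by (subst prod.reindex) (auto simp: inj_on_def tdiff_swap[of "x c"])
    then show ?thesis by (simp only: prod.distrib prod_constant card_greaterThanAtMost)
  qed
  have factor: "node_factor M x c
      = (\<Prod>b\<in>{1..<c}. tdiff (x c) (x b)) * (\<Prod>a\<in>{c<..M}. tdiff (x c) (x a))"
    unfolding node_factor_def split by (rule prod.union_disjoint) auto
  have "prod (\<lambda>(a, b). tdiff (x a) (x b)) ({c} \<times> {1..<c} \<union> (\<lambda>a. (a, c)) ` {c<..M})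
      = prod (\<lambda>(a, b). tdiff (x a) (x b)) ({c} \<times> {1..<c})
        * prod (\<lambda>(a, b). tdiff (x a) (x b)) ((\<lambda>a. (a, c)) ` {c<..M})"
    by (rule prod.union_disjoint) auto
  then show ?thesis unfolding below above factor by (simp add: mult_ac)
qed

lemma vdm_node_factor:
  fixes x y :: "nat \<Rightarrow> 'a::field"
  assumes c: "c \<in> {1..M}" and same: "\<And>b. b \<noteq> c \<Longrightarrow> x b = y b"
  shows "vdm M x * node_factor M y c = vdm M y * node_factor M x c"
proof -
  define P where "P = Sigma {1..M} (\<lambda>a. {1..<a})"
  define Pc where "Pc = {c} \<times> {1..<c} \<union> (\<lambda>a. (a, c)) ` {c<..M}"
  define f :: "(nat \<Rightarrow> 'a) \<Rightarrow> nat \<times> nat \<Rightarrow> 'a"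
    where "f z = (\<lambda>(a, b). tdiff (z a) (z b))" for z
  have sub: "Pc \<subseteq> P" using c by (auto simp: P_def Pc_def)
  have split: "vdm M z = prod (f z) Pc * prod (f z) (P - Pc)" for z
  proof -
    have "vdm M z = prod (f z) P" unfolding vdm_def P_def f_def by (simp add: prod.Sigma)
    then show ?thesis using prod.subset_diff[OF sub] by (simp add: P_def mult.commute)
  qed
  have rest: "prod (f x) (P - Pc) = prod (f y) (P - Pc)"
  proof (rule prod.cong)
    fix ab assume "ab \<in> P - Pc"
    then obtain a b where "ab = (a, b)" "a \<noteq> c" "b \<noteq> c"
      by (cases ab) (auto simp: P_def Pc_def image_iff)
    then show "f x ab = f y ab" by (simp add: f_def same)
  qed simp
  have through: "prod (f z) Pc = (-1) ^ (M - c) * node_factor M z c" for z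
    unfolding f_def Pc_def by (rule vdm_pairs_through_node[OF c])
  show ?thesis
    unfolding split[of x] split[of y] rest through by (simp add: mult_ac)
qed

lemma tdiff_nodes_nonzero:
  assumes "\<And>a. a \<in> {1..M} \<Longrightarrow> x a \<noteq> 0"
    and "\<And>a b. a \<in> {1..M} \<Longrightarrow> b \<in> {1..M} \<Longrightarrow> a \<noteq> b \<Longrightarrow> (x a)\<^sup>2 \<noteq> (x b)\<^sup>2"
    and "a \<in> {1..M}" "b \<in> {1..M}" "a \<noteq> b"
  shows "tdiff (x a) (x b) \<noteq> 0"
  using assms(2)[OF assms(3-5)] tdiff_eq_0_iff[OF assms(1)[OF assms(3)] assms(1)[OF assms(4)]]
  by simp

lemma vdm_nonzero:
  assumes "\<And>a. a \<in> {1..M} \<Longrightarrow> x a \<noteq> 0"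
    and "\<And>a b. a \<in> {1..M} \<Longrightarrow> b \<in> {1..M} \<Longrightarrow> a \<noteq> b \<Longrightarrow> (x a)\<^sup>2 \<noteq> (x b)\<^sup>2"
  shows "vdm M x \<noteq> 0"
proof -
  have "tdiff (x a) (x b) \<noteq> 0" if "a \<in> {1..M}" "b \<in> {1..<a}" for a b
    by (rule tdiff_nodes_nonzero[OF assms]) (use that in auto)
  then show ?thesis unfolding vdm_def prod_zero_iff[OF finite_atLeastAtMost] prod_zero_iff[OF finite_atLeastLessThan]
    by blast
qed

lemma node_factor_nonzero:
  assumes "\<And>a. a \<in> {1..M} \<Longrightarrow> x a \<noteq> 0"
    and "\<And>a b. a \<in> {1..M} \<Longrightarrow> b \<in> {1..M} \<Longrightarrow> a \<noteq> b \<Longrightarrow> (x a)\<^sup>2 \<noteq> (x b)\<^sup>2"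
    and c: "c \<in> {1..M}"
  shows "node_factor M x c \<noteq> 0"
proof -
  have "tdiff (x c) (x b) \<noteq> 0" if "b \<in> {1..M} - {c}" for b
    by (rule tdiff_nodes_nonzero[OF assms(1,2) c]) (use that in auto)
  then show ?thesis unfolding node_factor_def prod_zero_iff[OF finite_Diff[OF finite_atLeastAtMost]]
    by blast
qed

text \<open>Outside finitely many points, no factor \<open>\<lambda>/y\<^sub>b - y\<^sub>b/\<lambda>\<close> vanishes; such a
  generic spectral parameter lets us cancel these factors.\<close>
lemma exists_generic_point:
  fixes y :: "nat \<Rightarrow> 'a::field_char_0"
  assumes "finite B" and y: "\<And>b. b \<in> B \<Longrightarrow> y b \<noteq> 0"
  shows "\<exists>lam. lam \<noteq> 0 \<and> (\<forall>b\<in>B. tdiff lam (y b) \<noteq> 0)"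
proof -
  have "finite (insert 0 (y ` B \<union> uminus ` y ` B))" using assms(1) by simp
  from ex_new_if_finite[OF infinite_UNIV_char_0 this]
  obtain lam where lam: "lam \<notin> insert 0 (y ` B \<union> uminus ` y ` B)" ..
  have "tdiff lam (y b) \<noteq> 0" if b: "b \<in> B" for b
  proof -
    have "lam \<noteq> y b" "lam \<noteq> - y b" using lam b by auto
    then have "lam\<^sup>2 \<noteq> (y b)\<^sup>2" by (simp add: power2_eq_iff)
    moreover have "lam \<noteq> 0" using lam by simp
    ultimately show ?thesis using tdiff_eq_0_iff y[OF b] by blast
  qed
  moreover have "lam \<noteq> 0" using lam by simp
  ultimately show ?thesis by blast
qed

section \<open>Shifts in \<open>(\<int>/p\<int>)\<^sup>N\<close>\<close>

lemma idx_update: "k \<in> sov_idx N p \<Longrightarrow> a \<in> {1..N} \<Longrightarrow> v < p \<Longrightarrow> k(a := v) \<in> sov_idx N p"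
  unfolding sov_idx_def by auto

lemma kplus_idx: "0 < p \<Longrightarrow> k \<in> sov_idx N p \<Longrightarrow> a \<in> {1..N} \<Longrightarrow> kplus p k a \<in> sov_idx N p"
  unfolding kplus_def by (rule idx_update) auto

lemma kminus_idx: "0 < p \<Longrightarrow> k \<in> sov_idx N p \<Longrightarrow> a \<in> {1..N} \<Longrightarrow> kminus p k a \<in> sov_idx N p"
  unfolding kminus_def by (rule idx_update) auto

lemma kminus_other: "b \<noteq> a \<Longrightarrow> kminus p k a b = k b"
  by (simp add: kminus_def)

lemma kplus_other: "b \<noteq> a \<Longrightarrow> kplus p k a b = k b"
  by (simp add: kplus_def)

lemma kminus_decrement:
  assumes "k a < p" and "0 < k a"
  shows "kminus p k a = k(a := k a - 1)"
proof -
  have "k a + p - 1 = (k a - 1) + p" using assms(2) by simp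
  then have "(k a + p - 1) mod p = (k a - 1) mod p" by (simp only: mod_add_self2)
  also have "\<dots> = k a - 1" using assms(1) by simp
  finally show ?thesis by (simp add: kminus_def)
qed

lemma kplus_kminus:
  assumes "k a < p"
  shows "kplus p (kminus p k a) a = k"
proof -
  have "((k a + p - 1) mod p + 1) mod p = (k a + p - 1 + 1) mod p"
    by (rule mod_add_left_eq)
  also have "\<dots> = k a" using assms by simp
  finally show ?thesis by (simp add: kplus_def kminus_def)
qed

lemma kminus_moves:
  assumes "k a < p" and "2 \<le> p"
  shows "kminus p k a a \<noteq> k a"
proof (cases "k a = 0")
  case True
  then show ?thesis using assms(2) by (simp add: kminus_def)
next
  case False
  then show ?thesis using kminus_decrement[of k a p, OF assms(1)] by simp
qed

lemma kplus_moves: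
  assumes "k a < p" and "2 \<le> p"
  shows "kplus p k a a \<noteq> k a"
proof (cases "k a + 1 < p")
  case True
  then show ?thesis by (simp add: kplus_def)
next
  case False
  then have "k a + 1 = p" using assms(1) by simp
  then show ?thesis using assms(2) by (simp add: kplus_def)
qed

lemma kplus_ne_kminus:
  assumes "k a < p" and "3 \<le> p"
  shows "kplus p k a \<noteq> kminus p k a"
proof -
  have "kplus p k a a \<noteq> kminus p k a a"
  proof (cases "k a = 0")
    case True
    then show ?thesis using assms(2) by (simp add: kplus_def kminus_def)
  next
    case False
    then have "kminus p k a a = k a - 1" using kminus_decrement[of k a p, OF assms(1)] by simp
    moreover have "kplus p k a a = (if k a + 1 < p then k a + 1 else 0)"
    proof (cases "k a + 1 < p")
      case False
      then have "k a + 1 = p" using assms(1) by simp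
      then show ?thesis by (simp add: kplus_def)
    qed (simp add: kplus_def)
    ultimately show ?thesis using False assms by auto
  qed
  then show ?thesis by metis
qed

definition ladder_weight :: "nat \<Rightarrow> (nat \<Rightarrow> nat \<Rightarrow> 'a::comm_monoid_mult) \<Rightarrow> (nat \<Rightarrow> nat) \<Rightarrow> 'a" where
  "ladder_weight M t h = (\<Prod>a\<in>{1..M}. \<Prod>j\<in>{1..h a}. t a j)"

lemma ladder_weight_cong:
  "(\<And>a. a \<in> {1..M} \<Longrightarrow> h a = h' a) \<Longrightarrow> ladder_weight M t h = ladder_weight M t h'"
  unfolding ladder_weight_def by (intro prod.cong) auto

lemma ladder_weight_step:
  assumes a: "a \<in> {1..M}" and "0 < h a"
  shows "ladder_weight M t h = ladder_weight M t (h(a := h a - 1)) * t a (h a)"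
proof -
  have remove: "ladder_weight M t g
      = (\<Prod>j\<in>{1..g a}. t a j) * (\<Prod>b\<in>{1..M} - {a}. \<Prod>j\<in>{1..g b}. t b j)" for g
    unfolding ladder_weight_def using prod.remove[OF finite_atLeastAtMost a] by simp
  obtain m where m: "h a = Suc m" using \<open>0 < h a\<close> gr0_implies_Suc by blast
  have "(\<Prod>b\<in>{1..M} - {a}. \<Prod>j\<in>{1..(h(a := h a - 1)) b}. t b j)
      = (\<Prod>b\<in>{1..M} - {a}. \<Prod>j\<in>{1..h b}. t b j)"
    by (rule prod.cong) auto
  then show ?thesis unfolding remove[of h] remove[of "h(a := h a - 1)"]
    by (simp add: m mult_ac)
qed

lemma power_inj_below_order:
  fixes z :: "'a::field"
  assumes z: "z \<noteq> 0" and order: "\<forall>m. 0 < m \<and> m < p \<longrightarrow> z ^ m \<noteq> 1"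
    and "i < p" "j < p" "z ^ i = z ^ j"
  shows "i = j"
proof -
  have ordered: "i = j" if "i \<le> j" "j < p" "z ^ i = z ^ j" for i j
  proof (rule ccontr)
    assume "i \<noteq> j"
    have "z ^ i * z ^ (j - i) = z ^ i * 1"
      using that(1,3) by (metis le_add_diff_inverse mult_1_right power_add)
    then have "z ^ (j - i) = 1" using z by simp
    then show False using order \<open>i \<noteq> j\<close> that by auto
  qed
  show ?thesis using ordered[of i j] ordered[of j i] assms(3-5) by (cases "i \<le> j") auto
qed

section \<open>The SOV setting\<close>

text \<open>The hypotheses of the theorem, collected in a locale.\<close>
locale sov_setting =
  fixes N p :: nat and q :: complex
    and eta0 kappa xi :: "nat \<Rightarrow> complex"
    and aa abar :: "complex \<Rightarrow> complex"
    and Aop Bop :: "complex \<Rightarrow> complex ^ 'n ^ 'n"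
    and Lb Rb :: "(nat \<Rightarrow> nat) \<Rightarrow> complex ^ 'n"
  assumes N_ge: "N \<ge> 1"
    and p_ge: "p \<ge> 3"
    and q_p: "q ^ p = 1"
    and q2_prim: "\<forall>m. 0 < m \<and> m < p \<longrightarrow> (q ^ 2) ^ m \<noteq> 1"
    and kappa_nz: "\<forall>n\<in>{1..N}. kappa n \<noteq> 0"
    and xi_nz: "\<forall>n\<in>{1..N}. xi n \<noteq> 0"
    and eta0_nz: "\<forall>a\<in>{1..N}. eta0 a \<noteq> 0"
    and eta_dist: "\<forall>a\<in>{1..brN N}. \<forall>b\<in>{1..brN N}. a \<noteq> b \<longrightarrow>
        (\<forall>h h'. (sov_eta q eta0 h a)\<^sup>2 \<noteq> (sov_eta q eta0 h' b)\<^sup>2)"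
    and abar_nz: "\<forall>a\<in>{1..N}. \<forall>j. abar (sov_eta q eta0 j a) \<noteq> 0"
    and L_B: "\<And>k lam. k \<in> sov_idx N p \<Longrightarrow> lam \<noteq> 0 \<Longrightarrow>
        Lb k v* Bop lam = sov_b N q eta0 kappa k lam *s Lb k"
    and L_A: "\<And>k lam. k \<in> sov_idx N p \<Longrightarrow> lam \<noteq> 0 \<Longrightarrow>
        Lb k v* Aop lam =
          (of_nat (eN N) * sov_b N q eta0 kappa k lam / sov_eta q eta0 (k N) N) *s
            ((lam / sov_etaA N q eta0 xi k) *s Lb (kminus p k N)
             - (sov_etaA N q eta0 xi k / lam) *s Lb (kplus p k N))
          + (\<Sum>a\<in>{1..brN N}.
               (sov_coef N q eta0 k a lam * aa (sov_eta q eta0 (k a) a)) *s Lb (kminus p k a))"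
    and R_B: "\<And>k lam. k \<in> sov_idx N p \<Longrightarrow> lam \<noteq> 0 \<Longrightarrow>
        Bop lam *v Rb k = sov_b N q eta0 kappa k lam *s Rb k"
    and R_A: "\<And>k lam. k \<in> sov_idx N p \<Longrightarrow> lam \<noteq> 0 \<Longrightarrow>
        Aop lam *v Rb k =
          (of_nat (eN N) * sov_b N q eta0 kappa k lam / sov_eta q eta0 (k N) N) *s
            ((lam / sov_etaA N q eta0 xi k) *s Rb (kplus p k N)
             - (sov_etaA N q eta0 xi k / lam) *s Rb (kminus p k N))
          + (\<Sum>a\<in>{1..brN N}.
               (sov_coef N q eta0 k a lam * abar (sov_eta q eta0 (k a) a)) *s Rb (kplus p k a))"
begin

abbreviation M :: nat where "M \<equiv> brN N"

abbreviation node :: "(nat \<Rightarrow> nat) \<Rightarrow> nat \<Rightarrow> complex" where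
  "node k a \<equiv> sov_eta q eta0 (k a) a"

lemma M_le: "M \<le> N"
  by (simp add: brN_def)

lemma odd_N_eN: "odd N \<Longrightarrow> eN N = 0"
  by (simp add: eN_def)

lemma even_N: "even N \<Longrightarrow> eN N = 1 \<and> M = N - 1"
  by (simp add: eN_def brN_def)

lemma extra_coordinate: "a \<in> {1..N} \<Longrightarrow> a \<notin> {1..M} \<Longrightarrow> even N \<and> a = N"
  by (auto simp: eN_def brN_def split: if_splits)

lemma N_in: "N \<in> {1..N}"
  using N_ge by simp

lemma node_in: "a \<in> {1..M} \<Longrightarrow> a \<in> {1..N}"
  using M_le by auto

lemma q_nz: "q \<noteq> 0"
  using q_p p_ge by (cases "q = 0") (auto simp: power_0_left)

lemma eta_nz: "a \<in> {1..N} \<Longrightarrow> sov_eta q eta0 j a \<noteq> 0"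
  using eta0_nz q_nz by (simp add: sov_eta_def)

lemma eta_sq_inj:
  assumes "a \<in> {1..N}" "i < p" "j < p" "(sov_eta q eta0 i a)\<^sup>2 = (sov_eta q eta0 j a)\<^sup>2"
  shows "i = j"
proof -
  have "(q\<^sup>2) ^ i * (eta0 a)\<^sup>2 = (q\<^sup>2) ^ j * (eta0 a)\<^sup>2"
    using assms(4) by (simp add: sov_eta_def power_mult_distrib flip: power_mult)
      (simp add: mult.commute)
  then have "(q\<^sup>2) ^ i = (q\<^sup>2) ^ j" using eta0_nz assms(1) by simp
  then show ?thesis
    using power_inj_below_order[OF _ q2_prim assms(2,3)] q_nz by simp
qed

lemma nodes_distinct:
  "a \<in> {1..M} \<Longrightarrow> b \<in> {1..M} \<Longrightarrow> a \<noteq> b \<Longrightarrow> (node k a)\<^sup>2 \<noteq> (node k b)\<^sup>2"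
  using eta_dist by blast

lemma nodes_nonzero: "a \<in> {1..M} \<Longrightarrow> node k a \<noteq> 0"
  using eta_nz node_in by blast

lemma K_nz: "sov_K N kappa \<noteq> 0"
  using kappa_nz by (simp add: sov_K_def)

lemma idx_lt: "k \<in> sov_idx N p \<Longrightarrow> a \<in> {1..N} \<Longrightarrow> k a < p"
  by (simp add: sov_idx_def)

lemma idx_out: "k \<in> sov_idx N p \<Longrightarrow> a \<notin> {1..N} \<Longrightarrow> k a = 0"
  by (simp add: sov_idx_def)

lemma kminus_in: "k \<in> sov_idx N p \<Longrightarrow> a \<in> {1..N} \<Longrightarrow> kminus p k a \<in> sov_idx N p"
  using kminus_idx p_ge by simp

lemma kplus_in: "k \<in> sov_idx N p \<Longrightarrow> a \<in> {1..N} \<Longrightarrow> kplus p k a \<in> sov_idx N p"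
  using kplus_idx p_ge by simp

lemma kminus_ne: "k \<in> sov_idx N p \<Longrightarrow> a \<in> {1..N} \<Longrightarrow> k' a = k a \<Longrightarrow> kminus p k a \<noteq> k'"
  using kminus_moves[of k a p] idx_lt p_ge by force

lemma kplus_ne: "k \<in> sov_idx N p \<Longrightarrow> a \<in> {1..N} \<Longrightarrow> k' a = k a \<Longrightarrow> kplus p k a \<noteq> k'"
  using kplus_moves[of k a p] idx_lt p_ge by force

subsection \<open>Orthogonality\<close>

lemma b_formula:
  "sov_b N q eta0 kappa k lam
     = sov_K N kappa * (node k N) ^ eN N * (\<Prod>a\<in>{1..M}. tdiff lam (node k a))"
  by (simp add: sov_b_def tdiff_def)

lemma b_nonzero:
  assumes lam: "lam \<noteq> 0" and avoid: "\<And>a. a \<in> {1..M} \<Longrightarrow> lam\<^sup>2 \<noteq> (node h a)\<^sup>2"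
  shows "sov_b N q eta0 kappa h lam \<noteq> 0"
proof -
  have "\<forall>a\<in>{1..M}. tdiff lam (node h a) \<noteq> 0"
    using tdiff_eq_0_iff[OF lam nodes_nonzero] avoid by blast
  then show ?thesis unfolding b_formula using K_nz eta_nz[OF N_in] by simp
qed

lemma b_separates_at_node:
  assumes k: "k \<in> sov_idx N p" and h: "h \<in> sov_idx N p"
    and a: "a \<in> {1..M}" and differ: "k a \<noteq> h a"
  shows "sov_b N q eta0 kappa k (node k a) = 0" and "sov_b N q eta0 kappa h (node k a) \<noteq> 0"
proof -
  show "sov_b N q eta0 kappa k (node k a) = 0"
    unfolding b_formula using a by (auto simp: tdiff_def)
  have "(node k a)\<^sup>2 \<noteq> (node h b)\<^sup>2" if b: "b \<in> {1..M}" for b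
  proof (cases "b = a")
    case True
    then show ?thesis
      using eta_sq_inj[OF node_in[OF a] idx_lt[OF k node_in[OF a]] idx_lt[OF h node_in[OF a]]]
        differ by auto
  next
    case False
    then show ?thesis using eta_dist a b by auto
  qed
  then show "sov_b N q eta0 kappa h (node k a) \<noteq> 0"
    using b_nonzero nodes_nonzero[OF a] by blast
qed

text \<open>If \<open>k\<close> and \<open>h\<close> agree at all interpolation nodes but differ, they differ in the
  extra coordinate \<open>N\<close> (\<open>N\<close> even), which enters \<open>b\<close> through the prefactor \<open>\<eta>\<^sub>N\<close>.\<close>
lemma b_separates_at_extra:
  assumes k: "k \<in> sov_idx N p" and h: "h \<in> sov_idx N p" and kh: "k \<noteq> h"
    and agree: "\<And>a. a \<in> {1..M} \<Longrightarrow> k a = h a"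
  shows "\<exists>lam. lam \<noteq> 0 \<and> sov_b N q eta0 kappa k lam \<noteq> sov_b N q eta0 kappa h lam"
proof -
  obtain a where "k a \<noteq> h a" using kh by blast
  moreover have "a \<in> {1..N}" using idx_out[OF k] idx_out[OF h] \<open>k a \<noteq> h a\<close> by metis
  ultimately have ev: "even N" and aN: "a = N" using extra_coordinate agree by blast+
  have "node k N \<noteq> node h N"
    using eta_sq_inj[OF N_in idx_lt[OF k N_in] idx_lt[OF h N_in]] \<open>k a \<noteq> h a\<close> aN by auto
  obtain lam where lam: "lam \<noteq> 0" "\<forall>b\<in>{1..M}. tdiff lam (node k b) \<noteq> 0"
    using exists_generic_point[of "{1..M}" "node k"] nodes_nonzero by auto
  have "(\<Prod>b\<in>{1..M}. tdiff lam (node h b)) = (\<Prod>b\<in>{1..M}. tdiff lam (node k b))"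
    using agree by (intro prod.cong) auto
  moreover have "(\<Prod>b\<in>{1..M}. tdiff lam (node k b)) \<noteq> 0" using lam by simp
  ultimately have "sov_b N q eta0 kappa k lam \<noteq> sov_b N q eta0 kappa h lam"
    unfolding b_formula using ev K_nz \<open>node k N \<noteq> node h N\<close> by (simp add: eN_def)
  then show ?thesis using lam by blast
qed

lemma b_separates:
  assumes k: "k \<in> sov_idx N p" and h: "h \<in> sov_idx N p" and kh: "k \<noteq> h"
  shows "\<exists>lam. lam \<noteq> 0 \<and> sov_b N q eta0 kappa k lam \<noteq> sov_b N q eta0 kappa h lam"
proof (cases "\<exists>a\<in>{1..M}. k a \<noteq> h a")
  case True
  then obtain a where a: "a \<in> {1..M}" "k a \<noteq> h a" by blast
  show ?thesis
    using b_separates_at_node[OF k h a] nodes_nonzero[OF a(1)] by metis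
next
  case False
  then show ?thesis using b_separates_at_extra[OF k h kh] by blast
qed

theorem orthogonality:
  assumes k: "k \<in> sov_idx N p" and h: "h \<in> sov_idx N p" and kh: "k \<noteq> h"
  shows "pairing (Lb k) (Rb h) = 0"
proof -
  obtain lam where lam: "lam \<noteq> 0"
    and differ: "sov_b N q eta0 kappa k lam \<noteq> sov_b N q eta0 kappa h lam"
    using b_separates[OF k h kh] by blast
  have "sov_b N q eta0 kappa k lam * pairing (Lb k) (Rb h)
      = sov_b N q eta0 kappa h lam * pairing (Lb k) (Rb h)"
    using pairing_adjoint[of "Lb k" "Bop lam" "Rb h"]
    by (simp add: L_B[OF k lam] R_B[OF h lam] pairing_scale_left pairing_scale_right)
  then show ?thesis using differ by simp
qed

subsection \<open>Matrix elements of \<open>A\<close> between neighbouring states\<close>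

text \<open>By orthogonality, pairing the expansion of \<open>\<langle>k|A(\<lambda>)\<close> (resp. \<open>A(\<lambda>)|j\<rangle>\<close>) with
  one neighbouring state keeps a single term of it.\<close>

lemma coef_formula:
  "sov_coef N q eta0 k a lam
     = (\<Prod>b\<in>{1..M} - {a}. tdiff lam (node k b)) / node_factor M (node k) a"
  unfolding sov_coef_def node_factor_def tdiff_def by (simp add: prod_dividef)

lemma left_entry_node:
  assumes k: "k \<in> sov_idx N p" and c: "c \<in> {1..M}" and lam: "lam \<noteq> 0"
  defines "k' \<equiv> kminus p k c"
  shows "pairing (Lb k v* Aop lam) (Rb k')
       = sov_coef N q eta0 k c lam * aa (node k c) * pairing (Lb k') (Rb k')"
proof -
  have k': "k' \<in> sov_idx N p" unfolding k'_def using kminus_in[OF k node_in[OF c]] .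
  have extra: "eN N = 0 \<or>
      (pairing (Lb (kminus p k N)) (Rb k') = 0 \<and> pairing (Lb (kplus p k N)) (Rb k') = 0)"
  proof (cases "even N")
    case True
    then have "k' N = k N" using c even_N by (auto simp: k'_def kminus_other)
    then show ?thesis
      using orthogonality[OF kminus_in[OF k N_in] k' kminus_ne[OF k N_in]]
        orthogonality[OF kplus_in[OF k N_in] k' kplus_ne[OF k N_in]] by simp
  qed (simp add: odd_N_eN)
  have others: "pairing (Lb (kminus p k a)) (Rb k') = 0" if a: "a \<in> {1..M} - {c}" for a
  proof -
    have "k' a = k a" using a by (simp add: k'_def kminus_other)
    then show ?thesis
      using orthogonality[OF kminus_in[OF k node_in] k' kminus_ne[OF k node_in]] a by simp
  qed
  have "(\<Sum>a\<in>{1..M}. sov_coef N q eta0 k a lam * aa (node k a) * pairing (Lb (kminus p k a)) (Rb k'))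
      = sov_coef N q eta0 k c lam * aa (node k c) * pairing (Lb k') (Rb k')"
    using c others by (simp add: sum.remove k'_def)
  then show ?thesis using extra unfolding L_A[OF k lam] pairing_linear by auto
qed

lemma right_entry_node:
  assumes j: "j \<in> sov_idx N p" and c: "c \<in> {1..M}" and lam: "lam \<noteq> 0"
  defines "j' \<equiv> kplus p j c"
  shows "pairing (Lb j') (Aop lam *v Rb j)
       = sov_coef N q eta0 j c lam * abar (node j c) * pairing (Lb j') (Rb j')"
proof -
  have j': "j' \<in> sov_idx N p" unfolding j'_def using kplus_in[OF j node_in[OF c]] .
  have extra: "eN N = 0 \<or>
      (pairing (Lb j') (Rb (kplus p j N)) = 0 \<and> pairing (Lb j') (Rb (kminus p j N)) = 0)"
  proof (cases "even N")
    case True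
    then have "j' N = j N" using c even_N by (auto simp: j'_def kplus_other)
    then show ?thesis
      using orthogonality[OF j' kplus_in[OF j N_in] kplus_ne[OF j N_in, THEN not_sym]]
        orthogonality[OF j' kminus_in[OF j N_in] kminus_ne[OF j N_in, THEN not_sym]] by simp
  qed (simp add: odd_N_eN)
  have others: "pairing (Lb j') (Rb (kplus p j a)) = 0" if a: "a \<in> {1..M} - {c}" for a
  proof -
    have "j' a = j a" using a by (simp add: j'_def kplus_other)
    then show ?thesis
      using orthogonality[OF j' kplus_in[OF j node_in] kplus_ne[OF j node_in, THEN not_sym]] a
      by simp
  qed
  have "(\<Sum>a\<in>{1..M}. sov_coef N q eta0 j a lam * abar (node j a) * pairing (Lb j') (Rb (kplus p j a)))
      = sov_coef N q eta0 j c lam * abar (node j c) * pairing (Lb j') (Rb j')"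
    using c others by (simp add: sum.remove j'_def)
  then show ?thesis using extra unfolding R_A[OF j lam] pairing_linear by auto
qed

text \<open>The same for the extra coordinate \<open>N\<close> (\<open>N\<close> even), where the neighbours
  \<open>k \<plusminus> e\<^sub>N\<close> are distinct because \<open>p \<ge> 3\<close>.\<close>
lemma left_entry_extra:
  assumes k: "k \<in> sov_idx N p" and ev: "even N" and lam: "lam \<noteq> 0"
  defines "k' \<equiv> kminus p k N"
  shows "pairing (Lb k v* Aop lam) (Rb k')
       = sov_b N q eta0 kappa k lam / node k N * (lam / sov_etaA N q eta0 xi k)
         * pairing (Lb k') (Rb k')"
proof -
  have k': "k' \<in> sov_idx N p" unfolding k'_def using kminus_in[OF k N_in] .
  have others: "pairing (Lb (kminus p k a)) (Rb k') = 0" if a: "a \<in> {1..M}" for a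
  proof -
    have "a \<noteq> N" using a even_N[OF ev] N_ge by auto
    then have "k' a = k a" by (simp add: k'_def kminus_other)
    then show ?thesis
      using orthogonality[OF kminus_in[OF k node_in] k' kminus_ne[OF k node_in]] a by simp
  qed
  have "pairing (Lb (kplus p k N)) (Rb k') = 0"
    using orthogonality[OF kplus_in[OF k N_in] k'] kplus_ne_kminus idx_lt[OF k N_in] p_ge
    by (simp add: k'_def)
  then show ?thesis
    unfolding L_A[OF k lam] pairing_linear using others even_N[OF ev] by (simp add: k'_def)
qed

lemma right_entry_extra:
  assumes j: "j \<in> sov_idx N p" and ev: "even N" and lam: "lam \<noteq> 0"
  defines "j' \<equiv> kplus p j N"
  shows "pairing (Lb j') (Aop lam *v Rb j)
       = sov_b N q eta0 kappa j lam / node j N * (lam / sov_etaA N q eta0 xi j)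
         * pairing (Lb j') (Rb j')"
proof -
  have j': "j' \<in> sov_idx N p" unfolding j'_def using kplus_in[OF j N_in] .
  have others: "pairing (Lb j') (Rb (kplus p j a)) = 0" if a: "a \<in> {1..M}" for a
  proof -
    have "a \<noteq> N" using a even_N[OF ev] N_ge by auto
    then have "j' a = j a" by (simp add: j'_def kplus_other)
    then show ?thesis
      using orthogonality[OF j' kplus_in[OF j node_in] kplus_ne[OF j node_in, THEN not_sym]] a
      by simp
  qed
  have "pairing (Lb j') (Rb (kminus p j N)) = 0"
    using orthogonality[OF j' kminus_in[OF j N_in]] kplus_ne_kminus idx_lt[OF j N_in] p_ge
    by (simp add: j'_def)
  then show ?thesis
    unfolding R_A[OF j lam] pairing_linear using others even_N[OF ev] by (simp add: j'_def)
qed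

subsection \<open>Recursion for the norms\<close>

text \<open>Comparing the two evaluations of \<open>\<langle>k|A(\<lambda>)|k - e\<^sub>c\<rangle>\<close> at a generic \<open>\<lambda>\<close>:
  the numerators of the interpolation coefficients cancel, and their denominators
  are converted into Vandermonde products by \<open>vdm_node_factor\<close>.\<close>
lemma norm_recursion_node:
  assumes k: "k \<in> sov_idx N p" and c: "c \<in> {1..M}"
  defines "k' \<equiv> kminus p k c"
  shows "pairing (Lb k) (Rb k) * vdm M (node k) * abar (node k' c)
       = pairing (Lb k') (Rb k') * vdm M (node k') * aa (node k c)"
proof -
  have k': "k' \<in> sov_idx N p" unfolding k'_def using kminus_in[OF k node_in[OF c]] .
  have agree: "\<And>b. b \<noteq> c \<Longrightarrow> k' b = k b" by (simp add: k'_def kminus_other)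
  have return: "kplus p k' c = k"
    unfolding k'_def using kplus_kminus idx_lt[OF k node_in[OF c]] .
  obtain lam where lam: "lam \<noteq> 0"
    and generic: "\<forall>b\<in>{1..M} - {c}. tdiff lam (node k b) \<noteq> 0"
    using exists_generic_point[of "{1..M} - {c}" "node k"] nodes_nonzero by auto
  define num where "num = (\<Prod>b\<in>{1..M} - {c}. tdiff lam (node k b))"
  define D where "D = node_factor M (node k) c"
  define D' where "D' = node_factor M (node k') c"
  have num: "num \<noteq> 0" using generic by (simp add: num_def)
  have D: "D \<noteq> 0" "D' \<noteq> 0"
    unfolding D_def D'_def
    using node_factor_nonzero[OF nodes_nonzero[where k = k] nodes_distinct[where k = k] c]
      node_factor_nonzero[OF nodes_nonzero[where k = k'] nodes_distinct[where k = k'] c] by auto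
  have coef_k: "sov_coef N q eta0 k c lam = num / D"
    by (simp add: coef_formula num_def D_def)
  have coef_k': "sov_coef N q eta0 k' c lam = num / D'"
    unfolding coef_formula num_def D'_def by (intro arg_cong2[where f = divide] prod.cong) (auto simp: agree)
  have "sov_coef N q eta0 k c lam * aa (node k c) * pairing (Lb k') (Rb k')
      = sov_coef N q eta0 k' c lam * abar (node k' c) * pairing (Lb k) (Rb k)"
    using left_entry_node[OF k c lam] right_entry_node[OF k' c lam]
      pairing_adjoint[of "Lb k" "Aop lam" "Rb k'"]
    by (simp add: return[unfolded k'_def] k'_def)
  then have entries: "aa (node k c) * pairing (Lb k') (Rb k') * D'
      = abar (node k' c) * pairing (Lb k) (Rb k) * D"
    using num D by (simp add: coef_k coef_k' field_simps)
  have vdm: "vdm M (node k) * D' = vdm M (node k') * D"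
    unfolding D_def D'_def by (rule vdm_node_factor[OF c]) (simp add: agree)
  let ?P = "pairing (Lb k) (Rb k)" and ?P' = "pairing (Lb k') (Rb k')"
  have "?P * vdm M (node k) * abar (node k' c) * D' = ?P * abar (node k' c) * (vdm M (node k) * D')"
    by (simp add: mult_ac)
  also have "\<dots> = vdm M (node k') * (abar (node k' c) * ?P * D)"
    by (simp only: vdm) (simp add: mult_ac)
  also have "\<dots> = ?P' * vdm M (node k') * aa (node k c) * D'"
    by (simp only: entries[symmetric]) (simp add: mult_ac)
  finally show ?thesis using D by simp
qed

lemma etaA_nonzero: "sov_etaA N q eta0 xi k \<noteq> 0"
proof -
  have "(\<Prod>n\<in>{1..N}. xi n) \<noteq> 0" using xi_nz by simp
  moreover have "(\<Prod>n\<in>{1..N - 1}. sov_eta q eta0 (k n) n) \<noteq> 0"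
    by (subst prod_zero_iff) (auto intro!: eta_nz)
  ultimately show ?thesis by (simp add: sov_etaA_def)
qed

lemma norm_recursion_extra:
  assumes k: "k \<in> sov_idx N p" and ev: "even N"
  defines "k' \<equiv> kminus p k N"
  shows "pairing (Lb k) (Rb k) = pairing (Lb k') (Rb k')"
proof -
  have k': "k' \<in> sov_idx N p" unfolding k'_def using kminus_in[OF k N_in] .
  have agree: "\<And>b. b \<in> {1..N - 1} \<Longrightarrow> k' b = k b" by (auto simp: k'_def kminus_other)
  have return: "kplus p k' N = k" unfolding k'_def using kplus_kminus idx_lt[OF k N_in] .
  obtain lam where lam: "lam \<noteq> 0"
    and generic: "\<forall>b\<in>{1..M}. tdiff lam (node k b) \<noteq> 0"
    using exists_generic_point[of "{1..M}" "node k"] nodes_nonzero by auto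
  define factor where "factor j = sov_b N q eta0 kappa j lam / node j N * (lam / sov_etaA N q eta0 xi j)" for j
  have b_over_node: "sov_b N q eta0 kappa j lam / node j N
      = sov_K N kappa * (\<Prod>b\<in>{1..M}. tdiff lam (node j b))" for j
    unfolding b_formula using even_N[OF ev] eta_nz[OF N_in] by simp
  have same_factor: "factor k' = factor k"
  proof -
    have "(\<Prod>b\<in>{1..M}. tdiff lam (node k' b)) = (\<Prod>b\<in>{1..M}. tdiff lam (node k b))"
      using agree even_N[OF ev] by (intro prod.cong) auto
    moreover have "sov_etaA N q eta0 xi k' = sov_etaA N q eta0 xi k"
      unfolding sov_etaA_def using agree by (intro arg_cong2[where f = divide] prod.cong) auto
    ultimately show ?thesis by (simp add: factor_def b_over_node)
  qed
  have "factor k \<noteq> 0"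
    using K_nz lam generic etaA_nonzero by (simp add: factor_def b_over_node)
  moreover have "factor k * pairing (Lb k') (Rb k') = factor k' * pairing (Lb k) (Rb k)"
    using left_entry_extra[OF k ev lam] right_entry_extra[OF k' ev lam]
      pairing_adjoint[of "Lb k" "Aop lam" "Rb k'"]
    by (simp add: return[unfolded k'_def] k'_def factor_def)
  ultimately show ?thesis by (simp add: same_factor)
qed

subsection \<open>The norm formula\<close>

definition ladder_ratio :: "nat \<Rightarrow> nat \<Rightarrow> complex" where
  "ladder_ratio a j = aa (sov_eta q eta0 j a) / abar (sov_eta q eta0 (j - 1) a)"

definition scaled_norm :: "(nat \<Rightarrow> nat) \<Rightarrow> complex" where
  "scaled_norm h = pairing (Lb h) (Rb h) * vdm M (node h)"

lemma scaled_norm_descent: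
  assumes h: "h \<in> sov_idx N p" and a: "a \<in> {1..N}" and pos: "0 < h a"
  defines "h' \<equiv> h(a := h a - 1)"
  shows "\<exists>r. scaled_norm h = scaled_norm h' * r
           \<and> ladder_weight M ladder_ratio h = ladder_weight M ladder_ratio h' * r"
proof -
  have down: "kminus p h a = h'" unfolding h'_def using kminus_decrement idx_lt[OF h a] pos .
  show ?thesis
  proof (cases "a \<in> {1..M}")
    case True
    have "scaled_norm h * abar (node h' a) = scaled_norm h' * aa (node h a)"
      using norm_recursion_node[OF h True] by (simp add: scaled_norm_def down)
    moreover have "abar (node h' a) \<noteq> 0" using abar_nz a by simp
    moreover have "node h' a = sov_eta q eta0 (h a - 1) a" by (simp add: h'_def)
    ultimately have "scaled_norm h = scaled_norm h' * ladder_ratio a (h a)"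
      by (simp add: ladder_ratio_def field_simps)
    then show ?thesis using ladder_weight_step[of a M h ladder_ratio, OF True pos] by (auto simp: h'_def)
  next
    case False
    then have ev: "even N" and aN: "a = N" using extra_coordinate a by auto
    have "vdm M (node h) = vdm M (node h')"
      using False by (intro vdm_cong) (auto simp: h'_def)
    then have "scaled_norm h = scaled_norm h'"
      using norm_recursion_extra[OF h ev] by (simp add: scaled_norm_def aN down[unfolded aN])
    moreover have "ladder_weight M ladder_ratio h = ladder_weight M ladder_ratio h'"
      using False by (intro ladder_weight_cong) (auto simp: h'_def)
    ultimately show ?thesis by (intro exI[of _ 1]) simp
  qed
qed

lemma scaled_norm_formula:
  "h \<in> sov_idx N p \<Longrightarrow> scaled_norm h = scaled_norm (\<lambda>_. 0) * ladder_weight M ladder_ratio h"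
proof (induction "\<Sum>a\<in>{1..N}. h a" arbitrary: h)
  case 0
  then have "h = (\<lambda>_. 0)" using idx_out by fastforce
  then show ?case by (simp add: ladder_weight_def)
next
  case (Suc n)
  then obtain a where a: "a \<in> {1..N}" and pos: "0 < h a"
    by (metis gr0I nat.distinct(1) sum.neutral)
  define h' where "h' = h(a := h a - 1)"
  have h': "h' \<in> sov_idx N p"
    unfolding h'_def using idx_update[OF Suc.prems a] idx_lt[OF Suc.prems a] by simp
  have "(\<Sum>b\<in>{1..N}. h b) = h a + (\<Sum>b\<in>{1..N} - {a}. h b)"
    "(\<Sum>b\<in>{1..N}. h' b) = h' a + (\<Sum>b\<in>{1..N} - {a}. h' b)"
    using sum.remove[OF finite_atLeastAtMost a] by blast+
  moreover have "(\<Sum>b\<in>{1..N} - {a}. h' b) = (\<Sum>b\<in>{1..N} - {a}. h b)"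
    by (rule sum.cong) (auto simp: h'_def)
  ultimately have "n = (\<Sum>b\<in>{1..N}. h' b)" using Suc.hyps(2) pos by (simp add: h'_def)
  then have IH: "scaled_norm h' = scaled_norm (\<lambda>_. 0) * ladder_weight M ladder_ratio h'"
    using Suc.hyps(1) h' by blast
  obtain r where "scaled_norm h = scaled_norm h' * r"
    and "ladder_weight M ladder_ratio h = ladder_weight M ladder_ratio h' * r"
    using scaled_norm_descent[OF Suc.prems a pos] unfolding h'_def by blast
  then show ?case using IH by simp
qed

theorem norm_formula:
  "\<exists>C. \<forall>h\<in>sov_idx N p.
     pairing (Lb h) (Rb h) =
       C * (\<Prod>a\<in>{1..brN N}. \<Prod>j\<in>{1..h a}.
              aa (sov_eta q eta0 j a) / abar (sov_eta q eta0 (j - 1) a))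
       / (\<Prod>a\<in>{1..brN N}. \<Prod>b\<in>{1..<a}.
              sov_eta q eta0 (h a) a / sov_eta q eta0 (h b) b
              - sov_eta q eta0 (h b) b / sov_eta q eta0 (h a) a)"
proof (intro exI ballI)
  fix h assume h: "h \<in> sov_idx N p"
  have "vdm M (node h) \<noteq> 0"
    by (rule vdm_nonzero[OF nodes_nonzero nodes_distinct])
  then have "pairing (Lb h) (Rb h)
      = scaled_norm (\<lambda>_. 0) * ladder_weight M ladder_ratio h / vdm M (node h)"
    using scaled_norm_formula[OF h] by (simp add: scaled_norm_def field_simps)
  then show "pairing (Lb h) (Rb h) = scaled_norm (\<lambda>_. 0)
       * (\<Prod>a\<in>{1..brN N}. \<Prod>j\<in>{1..h a}.
              aa (sov_eta q eta0 j a) / abar (sov_eta q eta0 (j - 1) a))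
       / (\<Prod>a\<in>{1..brN N}. \<Prod>b\<in>{1..<a}.
              sov_eta q eta0 (h a) a / sov_eta q eta0 (h b) b
              - sov_eta q eta0 (h b) b / sov_eta q eta0 (h a) a)"
    by (simp add: ladder_weight_def ladder_ratio_def vdm_def tdiff_def)
qed

end

theorem mainTheorem1:
  fixes N p :: nat and q :: complex
    and eta0 kappa xi :: "nat \<Rightarrow> complex"
    and aa abar :: "complex \<Rightarrow> complex"
    and Aop Bop :: "complex \<Rightarrow> complex ^ 'n ^ 'n"
    and Lb Rb :: "(nat \<Rightarrow> nat) \<Rightarrow> complex ^ 'n"
  assumes N_ge: "N \<ge> 1"
    and p_ge: "p \<ge> 3" and p_odd: "odd p"
    and q_p: "q ^ p = 1"
    and q2_prim: "\<forall>m. 0 < m \<and> m < p \<longrightarrow> (q ^ 2) ^ m \<noteq> 1"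
    and kappa_nz: "\<forall>n\<in>{1..N}. kappa n \<noteq> 0"
    and xi_nz: "\<forall>n\<in>{1..N}. xi n \<noteq> 0"
    and eta0_nz: "\<forall>a\<in>{1..N}. eta0 a \<noteq> 0"
    and eta_dist: "\<forall>a\<in>{1..brN N}. \<forall>b\<in>{1..brN N}. a \<noteq> b \<longrightarrow>
        (\<forall>h h'. (sov_eta q eta0 h a)\<^sup>2 \<noteq> (sov_eta q eta0 h' b)\<^sup>2)"
    and abar_nz: "\<forall>a\<in>{1..N}. \<forall>j. abar (sov_eta q eta0 j a) \<noteq> 0"
    and L_basis: "is_basis_family (sov_idx N p) Lb"
    and R_basis: "is_basis_family (sov_idx N p) Rb"
    and L_B: "\<And>k lam. k \<in> sov_idx N p \<Longrightarrow> lam \<noteq> 0 \<Longrightarrow>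
        Lb k v* Bop lam = sov_b N q eta0 kappa k lam *s Lb k"
    and L_A: "\<And>k lam. k \<in> sov_idx N p \<Longrightarrow> lam \<noteq> 0 \<Longrightarrow>
        Lb k v* Aop lam =
          (of_nat (eN N) * sov_b N q eta0 kappa k lam / sov_eta q eta0 (k N) N) *s
            ((lam / sov_etaA N q eta0 xi k) *s Lb (kminus p k N)
             - (sov_etaA N q eta0 xi k / lam) *s Lb (kplus p k N))
          + (\<Sum>a\<in>{1..brN N}.
               (sov_coef N q eta0 k a lam * aa (sov_eta q eta0 (k a) a)) *s Lb (kminus p k a))"
    and R_B: "\<And>k lam. k \<in> sov_idx N p \<Longrightarrow> lam \<noteq> 0 \<Longrightarrow>
        Bop lam *v Rb k = sov_b N q eta0 kappa k lam *s Rb k"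
    and R_A: "\<And>k lam. k \<in> sov_idx N p \<Longrightarrow> lam \<noteq> 0 \<Longrightarrow>
        Aop lam *v Rb k =
          (of_nat (eN N) * sov_b N q eta0 kappa k lam / sov_eta q eta0 (k N) N) *s
            ((lam / sov_etaA N q eta0 xi k) *s Rb (kplus p k N)
             - (sov_etaA N q eta0 xi k / lam) *s Rb (kminus p k N))
          + (\<Sum>a\<in>{1..brN N}.
               (sov_coef N q eta0 k a lam * abar (sov_eta q eta0 (k a) a)) *s Rb (kplus p k a))"
  shows "(\<forall>k\<in>sov_idx N p. \<forall>h\<in>sov_idx N p. k \<noteq> h \<longrightarrow> pairing (Lb k) (Rb h) = 0)
    \<and> (\<exists>C. \<forall>h\<in>sov_idx N p.
         pairing (Lb h) (Rb h) =
           C * (\<Prod>a\<in>{1..brN N}. \<Prod>j\<in>{1..h a}.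
                  aa (sov_eta q eta0 j a) / abar (sov_eta q eta0 (j - 1) a))
           / (\<Prod>a\<in>{1..brN N}. \<Prod>b\<in>{1..<a}.
                  sov_eta q eta0 (h a) a / sov_eta q eta0 (h b) b
                  - sov_eta q eta0 (h b) b / sov_eta q eta0 (h a) a))"
proof -
  interpret sov_setting N p q eta0 kappa xi aa abar Aop Bop Lb Rb
    by unfold_locales (fact assms)+
  show ?thesis using orthogonality norm_formula by blast
qed

end
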